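(* Let $\pi\triangleright\Gamma\vdash^{(m,e)} t:\mathtt{n}$ be a derivation in the silly multi type system. (1) If $t\to_{ym} u$ then $m\geq1$ and there is a derivation $\rho\triangleright\Gamma\vdash^{(m-1,e)}u:\mathtt{n}$. (2) If $t\to_{yeAY}u$ or $t\to_{yeYN}u$ then $e\geq 1$ and there is a derivation $\rho\triangleright\Gamma\vdash^{(m,e-1)}u:\mathtt{n}$.
   Context: Terms: $t ::= x \mid \lambda x.t \mid t\,u \mid t[x\backslash u]$ ($t[x\backslash u]$ an explicit substitution binding $x$ in $t$; terms up to $\alpha$). Values $v ::= \lambda x.t$. Substitution contexts $S ::= \langle\cdot\rangle\mid S[x\backslash u]$. For a class of contexts $K$, $K\langle\langle t\rangle\rangle$ is plugging without capture of free variables of $t$. Root rules: $S\langle\lambda x.t\rangle u\mapsto_m S\langle t[x\backslash u]\rangle$; $K\langle\langle x\rangle\rangle[x\backslash u]\mapsto_{e_K} K\langle\langle u\rangle\rangle[x\backslash u]$. Answers $a ::= v\mid a[x\backslash a']$; name contexts $N ::= \langle\cdot\rangle\mid N t\mid N[x\backslash t]$; auxiliary contexts $A ::= \langle\cdot\rangle\mid a[x\backslash A]\mid A[x\backslash t]$; silly contexts $Y ::= A\langle N\rangle$. $\to_{ym} := Y\langle\mapsto_m\rangle$; $\to_{yeAY} := A\langle\mapsto_{e_Y}\rangle$; $\to_{yeYN} := Y\langle\mapsto_{e_N}\rangle$. Silly multi types: linear types $L ::= \mathtt{n} \mid M\multimap L$; multi types $M ::= [L_i]_{i\in I}$ finite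 multisets ($\mathbf{0}$ empty, $\uplus$ sum). Type contexts $\Gamma$ map variables to multi types with finite support; $\uplus$ pointwise; $\Gamma\setminus\!\!\setminus x$ sets $x$ to $\mathbf{0}$. Rules: (ax) $x:[L]\vdash^{(0,1)} x:L$; (many) from $(\Gamma_i\vdash^{(m_i,e_i)} t : L_i)_{i\in I}$, $I$ finite possibly empty, infer $\uplus_i\Gamma_i\vdash^{(\sum m_i,\sum e_i)} t : [L_i]_{i\in I}$; ($\mathrm{ax}_\lambda$) $\vdash^{(0,0)}\lambda x.t:\mathtt{n}$; ($\lambda$) from $\Gamma\vdash^{(m,e)}t:L$ infer $\Gamma\setminus\!\!\setminus x\vdash^{(m,e)}\lambda x.t:\Gamma(x)\multimap L$; (@) from $\Gamma\vdash^{(m,e)} t : M\multimap L$ and $\Delta\vdash^{(m',e')} u : M\uplus[\mathtt{n}]$ infer $\Gamma\uplus\Delta\vdash^{(m+m'+1,e+e')} tu : L$; (ES) from $\Gamma\vdash^{(m,e)} t:L$ and $\Delta\vdash^{(m',e')}u:\Gamma(x)\uplus[\mathtt{n}]$ infer $(\Gamma\setminus\!\!\setminus x)\uplus\Delta\vdash^{(m+m',e+e')} t[x\backslash u]:L$. *)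

theory Defs
  imports Main "HOL-Library.Multiset"
begin

text \<open>ES t u represents t[x\u]: index 0 of t is bound by the explicit substitution;
  u lives in the outer scope.\<close>
datatype trm = Var nat | Lam trm | App trm trm | ES trm trm

fun lift :: "nat \<Rightarrow> nat \<Rightarrow> trm \<Rightarrow> trm" where
  "lift k c (Var i) = Var (if i < c then i else i + k)"
| "lift k c (Lam t) = Lam (lift k (Suc c) t)"
| "lift k c (App t u) = App (lift k c t) (lift k c u)"
| "lift k c (ES t u) = ES (lift k (Suc c) t) (lift k c u)"

inductive answer :: "trm \<Rightarrow> bool" where
  "answer (Lam t)"
| "answer a \<Longrightarrow> answer a' \<Longrightarrow> answer (ES a a')"

datatype ctx = Hole | CAppL ctx trm | CAppR trm ctx | CLam ctx | CESL ctx trm | CESR trm ctx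

fun plug :: "ctx \<Rightarrow> trm \<Rightarrow> trm" where
  "plug Hole t = t"
| "plug (CAppL C u) t = App (plug C t) u"
| "plug (CAppR u C) t = App u (plug C t)"
| "plug (CLam C) t = Lam (plug C t)"
| "plug (CESL C u) t = ES (plug C t) u"
| "plug (CESR u C) t = ES u (plug C t)"

fun depth :: "ctx \<Rightarrow> nat" where
  "depth Hole = 0"
| "depth (CAppL C u) = depth C"
| "depth (CAppR u C) = depth C"
| "depth (CLam C) = Suc (depth C)"
| "depth (CESL C u) = Suc (depth C)"
| "depth (CESR u C) = depth C"

fun comp :: "ctx \<Rightarrow> ctx \<Rightarrow> ctx" where
  "comp Hole D = D"
| "comp (CAppL C u) D = CAppL (comp C D) u"
| "comp (CAppR u C) D = CAppR u (comp C D)"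
| "comp (CLam C) D = CLam (comp C D)"
| "comp (CESL C u) D = CESL (comp C D) u"
| "comp (CESR u C) D = CESR u (comp C D)"

inductive is_S :: "ctx \<Rightarrow> bool" where
  "is_S Hole"
| "is_S S \<Longrightarrow> is_S (CESL S t)"

inductive is_N :: "ctx \<Rightarrow> bool" where
  "is_N Hole"
| "is_N C \<Longrightarrow> is_N (CAppL C t)"
| "is_N C \<Longrightarrow> is_N (CESL C t)"

inductive is_A :: "ctx \<Rightarrow> bool" where
  "is_A Hole"
| "answer a \<Longrightarrow> is_A C \<Longrightarrow> is_A (CESR a C)"
| "is_A C \<Longrightarrow> is_A (CESL C t)"

definition is_Y :: "ctx \<Rightarrow> bool" where
  "is_Y C \<longleftrightarrow> (\<exists>A N. is_A A \<and> is_N N \<and> C = comp A N)"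

text \<open>S<\<lambda>x.s> r \<mapsto>m S<s[x\r]> ; r is shifted because it moves under the binders of S\<close>
definition root_m :: "trm \<Rightarrow> trm \<Rightarrow> bool" where
  "root_m t u \<longleftrightarrow> (\<exists>S s r. is_S S \<and> t = App (plug S (Lam s)) r
                        \<and> u = plug S (ES s (lift (depth S) 0 r)))"

text \<open>K<<x>>[x\s] \<mapsto>e_K K<<s>>[x\s] : at the hole of K, the variable bound by the outer
  ES has index depth K; the copy of s is shifted by depth K + 1.\<close>
definition root_e :: "(ctx \<Rightarrow> bool) \<Rightarrow> trm \<Rightarrow> trm \<Rightarrow> bool" where
  "root_e P t u \<longleftrightarrow> (\<exists>K s. P K \<and> t = ES (plug K (Var (depth K))) s
                        \<and> u = ES (plug K (lift (Suc (depth K)) 0 s)) s)"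

definition ym :: "trm \<Rightarrow> trm \<Rightarrow> bool" where
  "ym t u \<longleftrightarrow> (\<exists>Y l r. is_Y Y \<and> root_m l r \<and> t = plug Y l \<and> u = plug Y r)"

definition yeAY :: "trm \<Rightarrow> trm \<Rightarrow> bool" where
  "yeAY t u \<longleftrightarrow> (\<exists>A l r. is_A A \<and> root_e is_Y l r \<and> t = plug A l \<and> u = plug A r)"

definition yeYN :: "trm \<Rightarrow> trm \<Rightarrow> bool" where
  "yeYN t u \<longleftrightarrow> (\<exists>Y l r. is_Y Y \<and> root_e is_N l r \<and> t = plug Y l \<and> u = plug Y r)"

datatype ltype = TN | Arrow "ltype multiset" ltype

type_synonym tctx = "nat \<Rightarrow> ltype multiset"

definition empty_ctx :: tctx where "empty_ctx = (\<lambda>_. {#})"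

definition ctx_sum :: "tctx \<Rightarrow> tctx \<Rightarrow> tctx" where
  "ctx_sum G D = (\<lambda>x. G x + D x)"

definition ctx_unbind :: "tctx \<Rightarrow> tctx" where
  "ctx_unbind G = (\<lambda>i. G (Suc i))"

inductive der :: "tctx \<Rightarrow> trm \<Rightarrow> ltype \<Rightarrow> nat \<Rightarrow> nat \<Rightarrow> bool"
  and mder :: "tctx \<Rightarrow> trm \<Rightarrow> ltype multiset \<Rightarrow> nat \<Rightarrow> nat \<Rightarrow> bool" where
  ax: "der (empty_ctx(x := {#L#})) (Var x) L 0 1"
| ax_lam: "der empty_ctx (Lam t) TN 0 0"
| lam: "der G t L m e \<Longrightarrow> der (ctx_unbind G) (Lam t) (Arrow (G 0) L) m e"
| app: "der G t (Arrow M L) m e \<Longrightarrow> mder D u (M + {#TN#}) m' e'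
        \<Longrightarrow> der (ctx_sum G D) (App t u) L (m + m' + 1) (e + e')"
| es: "der G t L m e \<Longrightarrow> mder D u (G 0 + {#TN#}) m' e'
        \<Longrightarrow> der (ctx_sum (ctx_unbind G) D) (ES t u) L (m + m') (e + e')"
| many_empty: "mder empty_ctx t {#} 0 0"
| many_add: "der G t L m e \<Longrightarrow> mder D t M m' e'
        \<Longrightarrow> mder (ctx_sum G D) t (add_mset L M) (m + m') (e + e')"

end

(*
  A silly context Y = A<N> types its hole by a
  subderivation that can be swapped for any derivation of the same linear type agreeing
  on the variables bound by the context; at the A-nodes this works because an answer of
  type n is typed in the empty context. It remains to count at the root: a distant beta
  step S<\<lambda>x.t> u \<mapsto> S<t[x\u]> consumes exactly one application rule, and an exponential
  step replaces the axiom typing the substituted occurrence of x by one of the derivations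
  of the argument that the ES rule provides for the types of x, so one axiom disappears.
*)
theory Submission
  imports Defs
begin

inductive_cases der_VarE: "der G (Var x) L m e"
inductive_cases der_LamE: "der G (Lam t) L m e"
inductive_cases der_AppE: "der G (App t u) L m e"
inductive_cases der_ESE: "der G (ES t u) L m e"
inductive_cases mder_emptyE: "mder G t {#} m e"

lemma ctx_sum_empty [simp]: "ctx_sum G empty_ctx = G" "ctx_sum empty_ctx G = G"
  unfolding ctx_sum_def empty_ctx_def by auto

lemma lift_0 [simp]: "lift 0 c t = t"
  by (induction t arbitrary: c) auto

lemma lift_lift: "lift j c (lift k c t) = lift (j + k) c t"
  by (induction t arbitrary: c) auto

lemma plug_comp: "plug (comp C D) t = plug C (plug D t)"
  by (induction C) auto

lemma depth_comp: "depth (comp C D) = depth C + depth D"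
  by (induction C) auto

definition ctx_lift :: "nat \<Rightarrow> nat \<Rightarrow> tctx \<Rightarrow> tctx" where
  "ctx_lift k c G = (\<lambda>i. if i < c then G i else if i < c + k then {#} else G (i - k))"

lemma ctx_unbind_ctx_lift: "ctx_unbind (ctx_lift k (Suc c) G) = ctx_lift k c (ctx_unbind G)"
  unfolding ctx_lift_def ctx_unbind_def by (rule ext) (auto simp: Suc_diff_le)

lemma ctx_lift_sum: "ctx_lift k c (ctx_sum G D) = ctx_sum (ctx_lift k c G) (ctx_lift k c D)"
  unfolding ctx_lift_def ctx_sum_def by auto

lemma ctx_lift_empty: "ctx_lift k c empty_ctx = empty_ctx"
  unfolding ctx_lift_def empty_ctx_def by auto

lemma ctx_lift_single:
  "ctx_lift k c (empty_ctx(x := M)) = empty_ctx((if x < c then x else x + k) := M)"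
  unfolding ctx_lift_def empty_ctx_def by (rule ext) auto

lemma der_lift:
  "der G t L m e \<Longrightarrow> der (ctx_lift k c G) (lift k c t) L m e"
  "mder G t M m e \<Longrightarrow> mder (ctx_lift k c G) (lift k c t) M m e"
proof (induction arbitrary: k c and k c rule: der_mder.inducts)
  case (ax x L)
  show ?case
    unfolding ctx_lift_single lift.simps by (rule der_mder.ax)
next
  case (lam G t L m e)
  have "ctx_lift k (Suc c) G 0 = G 0"
    by (simp add: ctx_lift_def)
  with der_mder.lam[OF lam.IH[of k "Suc c"]] show ?case
    by (simp add: ctx_unbind_ctx_lift)
next
  case (app G t M L m e D u m' e')
  from der_mder.app[OF app.IH(1)[of k c] app.IH(2)[of k c]] show ?case
    by (simp add: ctx_lift_sum)
next
  case (es G t L m e D u m' e')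
  have "ctx_lift k (Suc c) G 0 = G 0"
    by (simp add: ctx_lift_def)
  with es.IH(2)
  have "mder (ctx_lift k c D) (lift k c u) (ctx_lift k (Suc c) G 0 + {#TN#}) m' e'"
    by simp
  from der_mder.es[OF es.IH(1) this] show ?case
    by (simp add: ctx_unbind_ctx_lift ctx_lift_sum)
qed (simp_all add: ctx_lift_empty ctx_lift_sum der_mder.intros)

lemma mder_remove:
  assumes "mder D t M m e" "L \<in># M"
  obtains D1 D2 m1 m2 e1 e2
  where "D = ctx_sum D1 D2" "m = m1 + m2" "e = e1 + e2"
    "der D1 t L m1 e1" "mder D2 t (M - {#L#}) m2 e2"
proof -
  have "\<exists>D1 D2 m1 m2 e1 e2. D = ctx_sum D1 D2 \<and> m = m1 + m2 \<and> e = e1 + e2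
          \<and> der D1 t L m1 e1 \<and> mder D2 t (M - {#L#}) m2 e2"
    using assms
  proof (induction arbitrary: L rule: der_mder.inducts(2)[where ?P1.0 = "\<lambda>_ _ _ _ _. True"])
    case (many_add G t L0 m e D M m' e')
    show ?case
    proof (cases "L = L0")
      case True
      with many_add.hyps have "der G t L m e" "mder D t (add_mset L0 M - {#L#}) m' e'"
        by simp_all
      then show ?thesis
        by blast
    next
      case False
      with many_add.prems have "L \<in># M"
        by simp
      with many_add.IH obtain D1 D2 m1 m2 e1 e2 where D: "D = ctx_sum D1 D2"
        and "m' = m1 + m2" "e' = e1 + e2" "der D1 t L m1 e1"
        and rest: "mder D2 t (M - {#L#}) m2 e2"
        by blast
      moreover have "mder (ctx_sum G D2) t (add_mset L0 M - {#L#}) (m + m2) (e + e2)"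
        using der_mder.many_add[OF many_add.hyps(1) rest] False by simp
      moreover have "ctx_sum G D = ctx_sum D1 (ctx_sum G D2)"
        unfolding D ctx_sum_def by (auto simp: add_ac)
      moreover have "m + m' = m1 + (m + m2)" "e + e' = e1 + (e + e2)"
        using \<open>m' = m1 + m2\<close> \<open>e' = e1 + e2\<close> by simp_all
      ultimately show ?thesis
        by blast
    qed
  qed simp_all
  with that show thesis
    by blast
qed

lemma mder_single_iff: "mder D t {#L#} m e \<longleftrightarrow> der D t L m e"
proof
  assume "mder D t {#L#} m e"
  then obtain D1 D2 m1 m2 e1 e2 where "D = ctx_sum D1 D2" "m = m1 + m2" "e = e1 + e2"
    "der D1 t L m1 e1" "mder D2 t ({#L#} - {#L#}) m2 e2"
    by (rule mder_remove) simp
  then show "der D t L m e"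
    by (auto elim: mder_emptyE)
next
  assume "der D t L m e"
  from der_mder.many_add[OF this der_mder.many_empty] show "mder D t {#L#} m e"
    by simp
qed

lemma der_answer_empty_ctx: "answer a \<Longrightarrow> der G a TN m e \<Longrightarrow> G = empty_ctx"
proof (induction a arbitrary: G m e rule: answer.induct)
  case (1 t)
  then show ?case by (auto elim: der_LamE)
next
  case (2 a a')
  from "2.prems" obtain Ga D ma ea m' e'
    where G: "G = ctx_sum (ctx_unbind Ga) D"
      and "der Ga a TN ma ea" and arg: "mder D a' (Ga 0 + {#TN#}) m' e'"
    by (auto elim: der_ESE)
  then have Ga: "Ga = empty_ctx"
    using "2.IH"(1) by blast
  with arg have "der D a' TN m' e'"
    by (simp add: empty_ctx_def mder_single_iff)
  with "2.IH"(2) have "D = empty_ctx" .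
  with G Ga show ?case
    by (simp add: ctx_sum_def ctx_unbind_def empty_ctx_def)
qed

text \<open>The typing of \<open>C\<langle>t\<rangle>\<close> is built around the typing \<open>(G1, L1, m1, e1)\<close> of the
  hole: the counters add up, the context adds up with \<open>G1\<close> shifted past the \<open>depth C\<close>
  binders of \<open>C\<close>, and the hole may be retyped by any derivation at \<open>L1\<close> that agrees
  with \<open>G1\<close> on those binders.\<close>
definition hole_typing ::
  "ctx \<Rightarrow> tctx \<Rightarrow> ltype \<Rightarrow> nat \<Rightarrow> nat \<Rightarrow> tctx \<Rightarrow> ltype \<Rightarrow> nat \<Rightarrow> nat \<Rightarrow> bool" where
  "hole_typing C G L m e G1 L1 m1 e1 \<longleftrightarrow>
     (\<exists>Gr mr er. G = (\<lambda>i. Gr i + G1 (i + depth C)) \<and> m = mr + m1 \<and> e = er + e1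
       \<and> (\<forall>G1' t m1' e1'. der G1' t L1 m1' e1' \<longrightarrow> (\<forall>i<depth C. G1' i = G1 i)
            \<longrightarrow> der (\<lambda>i. Gr i + G1' (i + depth C)) (plug C t) L (mr + m1') (er + e1')))"

lemma hole_typingI:
  assumes "G = (\<lambda>i. Gr i + G1 (i + depth C))" "m = mr + m1" "e = er + e1"
    "\<And>G1' t m1' e1'. der G1' t L1 m1' e1' \<Longrightarrow> \<forall>i<depth C. G1' i = G1 i
       \<Longrightarrow> der (\<lambda>i. Gr i + G1' (i + depth C)) (plug C t) L (mr + m1') (er + e1')"
  shows "hole_typing C G L m e G1 L1 m1 e1"
  unfolding hole_typing_def using assms by blast

lemma hole_typingE:
  assumes "hole_typing C G L m e G1 L1 m1 e1"
  obtains (factor) Gr mr er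
  where "G = (\<lambda>i. Gr i + G1 (i + depth C))" "m = mr + m1" "e = er + e1"
    "\<And>G1' t m1' e1'. der G1' t L1 m1' e1' \<Longrightarrow> \<forall>i<depth C. G1' i = G1 i
       \<Longrightarrow> der (\<lambda>i. Gr i + G1' (i + depth C)) (plug C t) L (mr + m1') (er + e1')"
  using assms unfolding hole_typing_def by blast

lemma hole_typing_replace:
  assumes "hole_typing C G L m e G1 L1 m1 e1" "der G1 t L1 m1' e1'"
  shows "m1 \<le> m \<and> e1 \<le> e \<and> der G (plug C t) L (m - m1 + m1') (e - e1 + e1')"
  using assms(1)
proof (cases rule: hole_typingE)
  case (factor Gr mr er)
  with factor(4)[OF assms(2)] show ?thesis
    by simp
qed

lemma hole_typing_Hole: "hole_typing Hole G L m e G L m e"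
  by (rule hole_typingI[where Gr = "\<lambda>_. {#}" and mr = 0 and er = 0]) auto

lemma hole_typing_AppL:
  assumes "hole_typing C G (Arrow M L) m e G1 L1 m1 e1" "mder D u (M + {#TN#}) m' e'"
  shows "hole_typing (CAppL C u) (ctx_sum G D) L (m + m' + 1) (e + e') G1 L1 m1 e1"
  using assms(1)
proof (cases rule: hole_typingE)
  case (factor Gr mr er)
  show ?thesis
  proof (rule hole_typingI[where Gr = "ctx_sum Gr D" and mr = "mr + m' + 1" and er = "er + e'"])
    fix G1' t m1' e1'
    assume "der G1' t L1 m1' e1'" "\<forall>i<depth (CAppL C u). G1' i = G1 i"
    with factor(4)
    have "der (\<lambda>i. Gr i + G1' (i + depth C)) (plug C t) (Arrow M L) (mr + m1') (er + e1')"
      by simp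
    from der_mder.app[OF this assms(2)]
    show "der (\<lambda>i. ctx_sum Gr D i + G1' (i + depth (CAppL C u))) (plug (CAppL C u) t) L
            (mr + m' + 1 + m1') (er + e' + e1')"
      by (simp add: ctx_sum_def add_ac)
  qed (use factor(1-3) in \<open>auto simp: ctx_sum_def add_ac\<close>)
qed

lemma hole_typing_ESL:
  assumes "hole_typing C G L m e G1 L1 m1 e1" "mder D u (G 0 + {#TN#}) m' e'"
  shows "hole_typing (CESL C u) (ctx_sum (ctx_unbind G) D) L (m + m') (e + e') G1 L1 m1 e1"
  using assms(1)
proof (cases rule: hole_typingE)
  case (factor Gr mr er)
  show ?thesis
  proof (rule hole_typingI[where Gr = "ctx_sum (ctx_unbind Gr) D" and mr = "mr + m'"
        and er = "er + e'"])
    fix G1' t m1' e1'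
    assume G1': "der G1' t L1 m1' e1'" "\<forall>i<depth (CESL C u). G1' i = G1 i"
    then have "Gr 0 + G1' (depth C) = G 0"
      by (simp add: factor(1))
    with der_mder.es[OF factor(4)[OF G1'(1)]] G1' assms(2)
    show "der (\<lambda>i. ctx_sum (ctx_unbind Gr) D i + G1' (i + depth (CESL C u)))
            (plug (CESL C u) t) L (mr + m' + m1') (er + e' + e1')"
      by (simp add: ctx_sum_def ctx_unbind_def add_ac)
  qed (use factor(1-3) in \<open>auto simp: ctx_sum_def ctx_unbind_def add_ac\<close>)
qed

lemma hole_typing_ESR:
  assumes "answer a" "der Ga a TN ma ea" "hole_typing C D TN m e G1 L1 m1 e1"
  shows "hole_typing (CESR a C) (ctx_sum (ctx_unbind Ga) D) TN (ma + m) (ea + e) G1 L1 m1 e1"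
  using assms(3)
proof (cases rule: hole_typingE)
  case (factor Gr mr er)
  have Ga: "Ga = empty_ctx"
    using der_answer_empty_ctx assms(1,2) by blast
  then have unbind_Ga: "ctx_unbind Ga = empty_ctx"
    by (simp add: ctx_unbind_def empty_ctx_def)
  show ?thesis
  proof (rule hole_typingI[where Gr = Gr and mr = "ma + mr" and er = "ea + er"])
    fix G1' t m1' e1'
    assume "der G1' t L1 m1' e1'" "\<forall>i<depth (CESR a C). G1' i = G1 i"
    with factor(4) Ga
    have "mder (\<lambda>i. Gr i + G1' (i + depth C)) (plug C t) (Ga 0 + {#TN#}) (mr + m1') (er + e1')"
      by (simp add: empty_ctx_def mder_single_iff)
    from der_mder.es[OF assms(2) this] unbind_Ga
    show "der (\<lambda>i. Gr i + G1' (i + depth (CESR a C))) (plug (CESR a C) t) TN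
            (ma + mr + m1') (ea + er + e1')"
      by (simp add: add_ac)
  qed (use factor(1-3) unbind_Ga in simp_all)
qed

lemma hole_typing_comp:
  assumes "hole_typing C G L m e G1 L1 m1 e1" "hole_typing D G1 L1 m1 e1 G2 L2 m2 e2"
  shows "hole_typing (comp C D) G L m e G2 L2 m2 e2"
  using assms(1)
proof (cases rule: hole_typingE)
  case (factor Gr mr er)
  note outer = this
  from assms(2) show ?thesis
  proof (cases rule: hole_typingE)
    case (factor Gr' mr' er')
    show ?thesis
    proof (rule hole_typingI[where Gr = "\<lambda>i. Gr i + Gr' (i + depth C)" and mr = "mr + mr'"
          and er = "er + er'"])
      fix G2' t m2' e2'
      assume G2': "der G2' t L2 m2' e2'" "\<forall>i<depth (comp C D). G2' i = G2 i"
      then have "\<forall>i<depth C. Gr' i + G2' (i + depth D) = G1 i"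
        by (simp add: factor(1) depth_comp)
      with outer(4)[OF factor(4)[OF G2'(1)]] G2'(2)
      show "der (\<lambda>i. Gr i + Gr' (i + depth C) + G2' (i + depth (comp C D)))
              (plug (comp C D) t) L (mr + mr' + m2') (er + er' + e2')"
        by (simp add: plug_comp depth_comp add_ac)
    qed (use outer(1-3) factor(1-3) in \<open>auto simp: depth_comp add_ac\<close>)
  qed
qed

lemma is_N_hole_typing:
  "is_N C \<Longrightarrow> der G (plug C t) L m e
    \<Longrightarrow> \<exists>G1 L1 m1 e1. der G1 t L1 m1 e1 \<and> hole_typing C G L m e G1 L1 m1 e1"
proof (induction C arbitrary: G L m e rule: is_N.induct)
  case 1
  then show ?case
    using hole_typing_Hole by fastforce
next
  case (2 C u)
  from "2.prems" obtain G' D M m' m'' e' e''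
    where G: "G = ctx_sum G' D" "m = m' + m'' + 1" "e = e' + e''"
      and rator: "der G' (plug C t) (Arrow M L) m' e'"
      and arg: "mder D u (M + {#TN#}) m'' e''"
    by (auto elim: der_AppE)
  from "2.IH"[OF rator] obtain G1 L1 m1 e1
    where "der G1 t L1 m1 e1" "hole_typing C G' (Arrow M L) m' e' G1 L1 m1 e1"
    by blast
  with hole_typing_AppL[OF _ arg] show ?case
    unfolding G by blast
next
  case (3 C u)
  from "3.prems" obtain G' D m' m'' e' e''
    where G: "G = ctx_sum (ctx_unbind G') D" "m = m' + m''" "e = e' + e''"
      and body: "der G' (plug C t) L m' e'" and arg: "mder D u (G' 0 + {#TN#}) m'' e''"
    by (auto elim: der_ESE)
  from "3.IH"[OF body] obtain G1 L1 m1 e1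
    where "der G1 t L1 m1 e1" "hole_typing C G' L m' e' G1 L1 m1 e1"
    by blast
  with hole_typing_ESL[where G = G', OF _ arg] show ?case
    unfolding G by blast
qed

lemma is_A_hole_typing:
  "is_A C \<Longrightarrow> der G (plug C t) TN m e
    \<Longrightarrow> \<exists>G1 m1 e1. der G1 t TN m1 e1 \<and> hole_typing C G TN m e G1 TN m1 e1"
proof (induction C arbitrary: G m e rule: is_A.induct)
  case 1
  then show ?case
    using hole_typing_Hole by fastforce
next
  case (2 a C)
  from "2.prems" obtain Ga D ma m' ea e'
    where G: "G = ctx_sum (ctx_unbind Ga) D" "m = ma + m'" "e = ea + e'"
      and a: "der Ga a TN ma ea" and arg: "mder D (plug C t) (Ga 0 + {#TN#}) m' e'"
    by (auto elim: der_ESE)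
  have "Ga = empty_ctx"
    using der_answer_empty_ctx "2.hyps"(1) a by blast
  with arg have "der D (plug C t) TN m' e'"
    by (simp add: empty_ctx_def mder_single_iff)
  from "2.IH"[OF this] obtain G1 m1 e1
    where "der G1 t TN m1 e1" "hole_typing C D TN m' e' G1 TN m1 e1"
    by blast
  with hole_typing_ESR[OF "2.hyps"(1) a] show ?case
    unfolding G by blast
next
  case (3 C u)
  from "3.prems" obtain G' D m' m'' e' e''
    where G: "G = ctx_sum (ctx_unbind G') D" "m = m' + m''" "e = e' + e''"
      and body: "der G' (plug C t) TN m' e'" and arg: "mder D u (G' 0 + {#TN#}) m'' e''"
    by (auto elim: der_ESE)
  from "3.IH"[OF body] obtain G1 m1 e1
    where "der G1 t TN m1 e1" "hole_typing C G' TN m' e' G1 TN m1 e1"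
    by blast
  with hole_typing_ESL[where G = G', OF _ arg] show ?case
    unfolding G by blast
qed

lemma is_Y_hole_typing:
  assumes "is_Y C" "der G (plug C t) TN m e"
  shows "\<exists>G1 L1 m1 e1. der G1 t L1 m1 e1 \<and> hole_typing C G TN m e G1 L1 m1 e1"
proof -
  obtain A N where A: "is_A A" and N: "is_N N" and C: "C = comp A N"
    using assms(1) unfolding is_Y_def by blast
  from assms(2) C have "der G (plug A (plug N t)) TN m e"
    by (simp add: plug_comp)
  with is_A_hole_typing[OF A] obtain G1 m1 e1
    where "der G1 (plug N t) TN m1 e1" and outer: "hole_typing A G TN m e G1 TN m1 e1"
    by blast
  with is_N_hole_typing[OF N] obtain G2 L2 m2 e2
    where "der G2 t L2 m2 e2" "hole_typing N G1 TN m1 e1 G2 L2 m2 e2"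
    by blast
  with hole_typing_comp[OF outer] show ?thesis
    unfolding C by blast
qed

lemma der_distant_beta:
  "is_S S \<Longrightarrow> der G (plug S (Lam s)) (Arrow M L) m e \<Longrightarrow> mder D r (M + {#TN#}) m' e'
   \<Longrightarrow> der (ctx_sum G D) (plug S (ES s (lift (depth S) 0 r))) L (m + m') (e + e')"
proof (induction S arbitrary: G m e D r rule: is_S.induct)
  case 1
  then show ?case by (auto elim!: der_LamE intro: der_mder.es)
next
  case (2 S w)
  from "2.prems"(1) obtain Gs Dw ms mw es ew
    where G: "G = ctx_sum (ctx_unbind Gs) Dw" "m = ms + mw" "e = es + ew"
      and body: "der Gs (plug S (Lam s)) (Arrow M L) ms es"
      and arg: "mder Dw w (Gs 0 + {#TN#}) mw ew"
    by (auto elim: der_ESE)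
  let ?D = "ctx_lift 1 0 D"
  have "der (ctx_sum Gs ?D) (plug S (ES s (lift (Suc (depth S)) 0 r))) L (ms + m') (es + e')"
    using "2.IH"[OF body der_lift(2)[where k = 1 and c = 0, OF "2.prems"(2)]]
    by (simp add: lift_lift)
  moreover have "ctx_sum Gs ?D 0 = Gs 0"
    by (simp add: ctx_sum_def ctx_lift_def)
  ultimately have "der (ctx_sum (ctx_unbind (ctx_sum Gs ?D)) Dw)
      (ES (plug S (ES s (lift (Suc (depth S)) 0 r))) w) L (ms + m' + mw) (es + e' + ew)"
    using arg by (metis der_mder.es)
  moreover have "ctx_sum (ctx_unbind (ctx_sum Gs ?D)) Dw = ctx_sum G D"
    using G by (auto simp: ctx_sum_def ctx_unbind_def ctx_lift_def add_ac)
  ultimately show ?case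
    using G by (simp add: add_ac)
qed

lemma subject_reduction_root_m:
  assumes "root_m l r" "der G l L m e"
  shows "m \<ge> 1 \<and> der G r L (m - 1) e"
proof -
  from assms(1) obtain S s w where "is_S S" "l = App (plug S (Lam s)) w"
    "r = plug S (ES s (lift (depth S) 0 w))"
    unfolding root_m_def by blast
  with assms(2) der_distant_beta show ?thesis
    by (fastforce elim: der_AppE)
qed

lemma hole_typing_var:
  assumes "hole_typing K G L m e G1 L1 m1 e1" "der G1 (Var (depth K)) L1 m1 e1"
  shows "L1 \<in># G 0 \<and> e \<ge> 1"
  using assms(1)
proof (cases rule: hole_typingE)
  case (factor Gr mr er)
  with assms(2) show ?thesis
    by (auto elim: der_VarE)
qed

text \<open>The axiom at the hole contributed \<open>1\<close> to \<open>e\<close> and \<open>L1\<close> to the binder; replacing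
  it by the lifted typing of \<open>s\<close> removes both.\<close>
lemma hole_typing_subst_var:
  assumes "hole_typing K G L m e G1 L1 m1 e1" "der G1 (Var (depth K)) L1 m1 e1"
    "der D s L1 ms es"
  shows "der (ctx_sum (G(0 := G 0 - {#L1#})) (ctx_lift 1 0 D))
      (plug K (lift (Suc (depth K)) 0 s)) L (m + ms) (e - 1 + es)"
  using assms(1)
proof (cases rule: hole_typingE)
  case (factor Gr mr er)
  let ?d = "depth K"
  from assms(2) have G1: "G1 = empty_ctx(?d := {#L1#})" "m1 = 0" "e1 = 1"
    by (auto elim: der_VarE)
  then have "\<forall>i<?d. ctx_lift (Suc ?d) 0 D i = G1 i"
    by (simp add: ctx_lift_def empty_ctx_def)
  with factor(4)[OF der_lift(1)[OF assms(3)]]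
  have "der (\<lambda>i. Gr i + ctx_lift (Suc ?d) 0 D (i + ?d)) (plug K (lift (Suc ?d) 0 s)) L
          (mr + ms) (er + es)" .
  moreover have "(\<lambda>i. Gr i + ctx_lift (Suc ?d) 0 D (i + ?d))
      = ctx_sum (G(0 := G 0 - {#L1#})) (ctx_lift 1 0 D)"
    using factor(1) G1 by (auto simp: ctx_sum_def ctx_lift_def empty_ctx_def)
  ultimately show ?thesis
    using factor(1-3) G1 by simp
qed

lemma subject_reduction_root_e:
  assumes "root_e P l r" "der G l L m e"
    and hole: "\<And>K Gb mb eb t. P K \<Longrightarrow> der Gb (plug K t) L mb eb
      \<Longrightarrow> \<exists>G1 L1 m1 e1. der G1 t L1 m1 e1 \<and> hole_typing K Gb L mb eb G1 L1 m1 e1"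
  shows "e \<ge> 1 \<and> der G r L m (e - 1)"
proof -
  from assms(1) obtain K s where "P K" and l: "l = ES (plug K (Var (depth K))) s"
    and r: "r = ES (plug K (lift (Suc (depth K)) 0 s)) s"
    unfolding root_e_def by blast
  from assms(2) l obtain Gb D mb ms eb es
    where G: "G = ctx_sum (ctx_unbind Gb) D" "m = mb + ms" "e = eb + es"
      and body: "der Gb (plug K (Var (depth K))) L mb eb"
      and arg: "mder D s (Gb 0 + {#TN#}) ms es"
    by (auto elim: der_ESE)
  from hole[OF \<open>P K\<close> body] obtain G1 L1 m1 e1
    where var: "der G1 (Var (depth K)) L1 m1 e1"
      and K: "hole_typing K Gb L mb eb G1 L1 m1 e1"
    by blast
  have L1: "L1 \<in># Gb 0" and "eb \<ge> 1"
    using hole_typing_var[OF K var] by simp_all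
  then have "L1 \<in># Gb 0 + {#TN#}"
    by simp
  with arg obtain D1 D2 ms1 ms2 es1 es2
    where D: "D = ctx_sum D1 D2" "ms = ms1 + ms2" "es = es1 + es2"
      and s: "der D1 s L1 ms1 es1" and rest: "mder D2 s (Gb 0 + {#TN#} - {#L1#}) ms2 es2"
    by (rule mder_remove)
  let ?Gb' = "ctx_sum (Gb(0 := Gb 0 - {#L1#})) (ctx_lift 1 0 D1)"
  have "?Gb' 0 + {#TN#} = Gb 0 + {#TN#} - {#L1#}"
    using L1 by (simp add: ctx_sum_def ctx_lift_def)
  with der_mder.es[OF hole_typing_subst_var[OF K var s]] rest
  have "der (ctx_sum (ctx_unbind ?Gb') D2) r L (mb + ms1 + ms2) (eb - 1 + es1 + es2)"
    unfolding r by metis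
  moreover have "ctx_sum (ctx_unbind ?Gb') D2 = G"
    unfolding G D by (auto simp: ctx_sum_def ctx_unbind_def ctx_lift_def add_ac)
  ultimately show ?thesis
    using G D \<open>eb \<ge> 1\<close> by (simp add: add_ac)
qed

lemma hole_typing_step_m:
  assumes "hole_typing C G L m e G1 L1 m1 e1" "m1 \<ge> 1 \<and> der G1 r L1 (m1 - 1) e1"
  shows "m \<ge> 1 \<and> der G (plug C r) L (m - 1) e"
  using hole_typing_replace[of C G L m e G1 L1 m1 e1 r "m1 - 1" e1] assms by auto

lemma hole_typing_step_e:
  assumes "hole_typing C G L m e G1 L1 m1 e1" "e1 \<ge> 1 \<and> der G1 r L1 m1 (e1 - 1)"
  shows "e \<ge> 1 \<and> der G (plug C r) L m (e - 1)"
  using hole_typing_replace[of C G L m e G1 L1 m1 e1 r m1 "e1 - 1"] assms by auto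

lemma subject_reduction_ym:
  assumes "ym t u" "der G t TN m e"
  shows "m \<ge> 1 \<and> der G u TN (m - 1) e"
proof -
  obtain Y l r where Y: "is_Y Y" and step: "root_m l r" and t: "t = plug Y l"
    and u: "u = plug Y r"
    using assms(1) unfolding ym_def by blast
  from is_Y_hole_typing[OF Y assms(2)[unfolded t]] obtain G1 L1 m1 e1
    where redex: "der G1 l L1 m1 e1" and Y_typing: "hole_typing Y G TN m e G1 L1 m1 e1"
    by blast
  from subject_reduction_root_m[OF step redex] show ?thesis
    unfolding u by (rule hole_typing_step_m[OF Y_typing])
qed

lemma subject_reduction_yeAY:
  assumes "yeAY t u" "der G t TN m e"
  shows "e \<ge> 1 \<and> der G u TN m (e - 1)"
proof -
  obtain A l r where A: "is_A A" and step: "root_e is_Y l r" and t: "t = plug A l"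
    and u: "u = plug A r"
    using assms(1) unfolding yeAY_def by blast
  from is_A_hole_typing[OF A assms(2)[unfolded t]] obtain G1 m1 e1
    where redex: "der G1 l TN m1 e1" and A_typing: "hole_typing A G TN m e G1 TN m1 e1"
    by blast
  from subject_reduction_root_e[OF step redex is_Y_hole_typing] show ?thesis
    unfolding u by (rule hole_typing_step_e[OF A_typing])
qed

lemma subject_reduction_yeYN:
  assumes "yeYN t u" "der G t TN m e"
  shows "e \<ge> 1 \<and> der G u TN m (e - 1)"
proof -
  obtain Y l r where Y: "is_Y Y" and step: "root_e is_N l r" and t: "t = plug Y l"
    and u: "u = plug Y r"
    using assms(1) unfolding yeYN_def by blast
  from is_Y_hole_typing[OF Y assms(2)[unfolded t]] obtain G1 L1 m1 e1
    where redex: "der G1 l L1 m1 e1" and Y_typing: "hole_typing Y G TN m e G1 L1 m1 e1"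
    by blast
  from subject_reduction_root_e[OF step redex is_N_hole_typing] show ?thesis
    unfolding u by (rule hole_typing_step_e[OF Y_typing])
qed

theorem proposition12p4:
  assumes "der \<Gamma> t TN m e"
  shows "(ym t u \<longrightarrow> m \<ge> 1 \<and> der \<Gamma> u TN (m - 1) e)
       \<and> (yeAY t u \<or> yeYN t u \<longrightarrow> e \<ge> 1 \<and> der \<Gamma> u TN m (e - 1))"
  using subject_reduction_ym subject_reduction_yeAY subject_reduction_yeYN assms by blast

end
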